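(* Assume the setting in the context. Let $x_i,x_j,x_k\in X$ be distinct, and suppose $(x_i,x_j)$ is an invisible pair, i.e., for all $M\subseteq X\setminus\{x_i\}$, $N\subseteq X\setminus\{x_j\}$ and $G_1,G_2\in\mathcal G$, $x_i-G_1(M)\not\perp\!\!\!\perp x_j-G_2(N)$. If $x_k$ is an ancestor of $x_i$ and $x_k\perp\!\!\!\perp x_j\mid x_i$, then $x_i$ is an ancestor of $x_j$.
   Context: Model: $X$ is a finite set of observed random variables and $U$ a finite set of unobserved random variables; $V=X\cup U$ and $G=(V,E)$ is a DAG on $V$. Each $v_i\in V$ satisfies $v_i=\sum_{x_j\in \mathrm{pa}(v_i)\cap X} f^{(i)}_j(x_j)+\sum_{u_k\in\mathrm{pa}(v_i)\cap U} f^{(i)}_k(u_k)+n_i$, where the $f$'s are nonlinear functions and the external noises $n_i$ are jointly independent. "Parent", "ancestor", "path", "d-separation" refer to $G$ (a path has distinct vertices). Causal Faithfulness Condition (CFC): any conditional independence among variables of $V$ that is not entailed by d-separation in $G$ does not hold. $\perp\!\!\!\perp$ denotes statistical independence, $\not\perp\!\!\!\perp$ dependence. Function class: $\mathcal G$ is a class of generalized additive functions: for $G\in\mathcal G$ and a set $M$ of observed variables, $G(M)=\sum_{x_m\in M} g_m(x_m)$ (with $G(\emptyset)=0$). It satisfies: for any $x_i,x_j\in X$, sets $M,N\subseteq X$, $G_1,G_2\in\mathcal G$ and external noise $n_k$, if $n_k\not\perp\!\!\!\perp x_i-G_1(M)$ and $n_k\not\perp\!\!\!\perp x_j-G_2(N)$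 then $x_i-G_1(M)\not\perp\!\!\!\perp x_j-G_2(N)$. Definitions, for $X'\subseteq X$ and $x_i,x_j\in X'$: an unobserved causal path (UCP) from $x_i$ to $x_j$ w.r.t. $X'$ is a directed path $x_i\to\cdots\to v_k\to x_j$ in $G$ with $v_k\notin X'$; an unobserved backdoor path (UBP) between $x_i$ and $x_j$ w.r.t. $X'$ is a path $x_i\leftarrow v_k\leftarrow\cdots\leftarrow v\to\cdots\to v_l\to x_j$ with $v_k,v_l\notin X'$ (allowing $v=v_k$, $v=v_l$, or $v=v_k=v_l$; $v$ may be in $X'$). "UBP/UCP between $x_i$ and $x_j$" means a UBP or a UCP in either direction. $(x_i,x_j)$ is invisible w.r.t. $X'$ if there is a UBP/UCP between them w.r.t. $X'$. When $X'$ is omitted, $X'=X$. Standing fact (taken as known), for $X'\subseteq X$ and distinct $x_i,x_j\in X'$: (F3) $(x_i,x_j)$ is invisible w.r.t. $X'$ iff for all $M\subseteq X'\setminus\{x_i\}$, $N\subseteq X'\setminus\{x_j\}$, $G_1,G_2\in\mathcal G$: $x_i-G_1(M)\not\perp\!\!\!\perp x_j-G_2(N)$. *)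

theory Defs
  imports "HOL-Probability.Probability"
begin

definition adjacent :: "('v \<times> 'v) set \<Rightarrow> 'v \<Rightarrow> 'v \<Rightarrow> bool" where
  "adjacent E a b \<longleftrightarrow> (a, b) \<in> E \<or> (b, a) \<in> E"

definition is_path :: "('v \<times> 'v) set \<Rightarrow> 'v list \<Rightarrow> bool" where
  "is_path E ps \<longleftrightarrow> ps \<noteq> [] \<and> distinct ps \<and>
     (\<forall>i. Suc i < length ps \<longrightarrow> adjacent E (ps ! i) (ps ! Suc i))"

definition is_dpath :: "('v \<times> 'v) set \<Rightarrow> 'v list \<Rightarrow> bool" where
  "is_dpath E ps \<longleftrightarrow> ps \<noteq> [] \<and> distinct ps \<and>
     (\<forall>i. Suc i < length ps \<longrightarrow> (ps ! i, ps ! Suc i) \<in> E)"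

definition ancestor :: "('v \<times> 'v) set \<Rightarrow> 'v \<Rightarrow> 'v \<Rightarrow> bool" where
  "ancestor E a b \<longleftrightarrow> (a, b) \<in> E\<^sup>+"

definition collider_at :: "('v \<times> 'v) set \<Rightarrow> 'v list \<Rightarrow> nat \<Rightarrow> bool" where
  "collider_at E ps i \<longleftrightarrow> (ps ! (i - 1), ps ! i) \<in> E \<and> (ps ! Suc i, ps ! i) \<in> E"

definition blocked :: "('v \<times> 'v) set \<Rightarrow> 'v set \<Rightarrow> 'v list \<Rightarrow> bool" where
  "blocked E Z ps \<longleftrightarrow> (\<exists>i. 0 < i \<and> Suc i < length ps \<and>
      ((\<not> collider_at E ps i \<and> ps ! i \<in> Z) \<or>
       (collider_at E ps i \<and> {d. (ps ! i, d) \<in> E\<^sup>*} \<inter> Z = {})))"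

definition d_separated :: "('v \<times> 'v) set \<Rightarrow> 'v set \<Rightarrow> 'v set \<Rightarrow> 'v set \<Rightarrow> bool" where
  "d_separated E A B Z \<longleftrightarrow>
     (\<forall>ps. is_path E ps \<and> hd ps \<in> A \<and> last ps \<in> B \<longrightarrow> blocked E Z ps)"

text \<open>Unobserved causal path from a to b w.r.t. X': a -> ... -> v_k -> b with v_k not in X'.\<close>
definition UCP :: "('v \<times> 'v) set \<Rightarrow> 'v set \<Rightarrow> 'v \<Rightarrow> 'v \<Rightarrow> bool" where
  "UCP E X' a b \<longleftrightarrow> (\<exists>ps. is_dpath E ps \<and> length ps \<ge> 2 \<and> hd ps = a \<and> last ps = b \<and>
      ps ! (length ps - 2) \<notin> X')"

text \<open>Unobserved backdoor path between a and b w.r.t. X':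
  a <- v_k <- ... <- v -> ... -> v_l -> b with v_k, v_l not in X'; the two directed
  branches from v share only v, so that the whole is a path with distinct vertices.\<close>
definition UBP :: "('v \<times> 'v) set \<Rightarrow> 'v set \<Rightarrow> 'v \<Rightarrow> 'v \<Rightarrow> bool" where
  "UBP E X' a b \<longleftrightarrow> (\<exists>p q. is_dpath E p \<and> is_dpath E q \<and> length p \<ge> 2 \<and> length q \<ge> 2 \<and>
      hd p = hd q \<and> last p = a \<and> last q = b \<and> set p \<inter> set q = {hd p} \<and>
      p ! (length p - 2) \<notin> X' \<and> q ! (length q - 2) \<notin> X')"

definition invisible :: "('v \<times> 'v) set \<Rightarrow> 'v set \<Rightarrow> 'v \<Rightarrow> 'v \<Rightarrow> bool" where
  "invisible E X' a b \<longleftrightarrow> UBP E X' a b \<or> UCP E X' a b \<or> UCP E X' b a"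

definition gen_sigma :: "'a measure \<Rightarrow> ('v \<Rightarrow> 'a \<Rightarrow> real) \<Rightarrow> 'v set \<Rightarrow> 'a measure" where
  "gen_sigma M Y C = sigma (space M) {Y c -` B \<inter> space M | c B. c \<in> C \<and> B \<in> sets borel}"

definition cond_indep :: "'a measure \<Rightarrow> ('v \<Rightarrow> 'a \<Rightarrow> real) \<Rightarrow> 'v set \<Rightarrow> 'v set \<Rightarrow> 'v set \<Rightarrow> bool" where
  "cond_indep M Y A B C \<longleftrightarrow>
     (\<forall>S \<in> sets (gen_sigma M Y A). \<forall>T \<in> sets (gen_sigma M Y B).
        AE \<omega> in M. real_cond_exp M (gen_sigma M Y C) (indicator (S \<inter> T)) \<omega> =
           real_cond_exp M (gen_sigma M Y C) (indicator S) \<omega> *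
           real_cond_exp M (gen_sigma M Y C) (indicator T) \<omega>)"

definition GAM :: "('v \<Rightarrow> real \<Rightarrow> real) \<Rightarrow> ('v \<Rightarrow> 'a \<Rightarrow> real) \<Rightarrow> 'v set \<Rightarrow> 'a \<Rightarrow> real" where
  "GAM g Y Ms \<omega> = (\<Sum>m\<in>Ms. g m (Y m \<omega>))"

definition nonlinear :: "(real \<Rightarrow> real) \<Rightarrow> bool" where
  "nonlinear f \<longleftrightarrow> \<not> (\<exists>a b. \<forall>x. f x = a * x + b)"

definition SEM :: "'a measure \<Rightarrow> ('v::finite \<times> 'v) set \<Rightarrow> ('v \<Rightarrow> 'v \<Rightarrow> real \<Rightarrow> real)
     \<Rightarrow> ('v \<Rightarrow> 'a \<Rightarrow> real) \<Rightarrow> ('v \<Rightarrow> 'a \<Rightarrow> real) \<Rightarrow> bool" where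
  "SEM M E f n Y \<longleftrightarrow> prob_space M \<and> acyclic E \<and>
     (\<forall>v. n v \<in> borel_measurable M \<and> Y v \<in> borel_measurable M) \<and>
     prob_space.indep_vars M (\<lambda>_. borel) n UNIV \<and>
     (\<forall>v p. (p, v) \<in> E \<longrightarrow> f v p \<in> borel_measurable borel \<and> nonlinear (f v p)) \<and>
     (\<forall>v. \<forall>\<omega>\<in>space M. Y v \<omega> = (\<Sum>p\<in>{p. (p, v) \<in> E}. f v p (Y p \<omega>)) + n v \<omega>)"

definition CFC :: "'a measure \<Rightarrow> ('v \<times> 'v) set \<Rightarrow> ('v \<Rightarrow> 'a \<Rightarrow> real) \<Rightarrow> bool" where
  "CFC M E Y \<longleftrightarrow> (\<forall>A B C. A \<inter> B = {} \<and> A \<inter> C = {} \<and> B \<inter> C = {} \<longrightarrow>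
       cond_indep M Y A B C \<longrightarrow> d_separated E A B C)"

definition resid :: "('v \<Rightarrow> 'a \<Rightarrow> real) \<Rightarrow> 'v \<Rightarrow> ('v \<Rightarrow> real \<Rightarrow> real) \<Rightarrow> 'v set \<Rightarrow> 'a \<Rightarrow> real" where
  "resid Y x g Ms = (\<lambda>\<omega>. Y x \<omega> - GAM g Y Ms \<omega>)"

definition class_property :: "'a measure \<Rightarrow> 'v set \<Rightarrow> ('v \<Rightarrow> 'a \<Rightarrow> real) \<Rightarrow> ('v \<Rightarrow> 'a \<Rightarrow> real)
     \<Rightarrow> ('v \<Rightarrow> real \<Rightarrow> real) set \<Rightarrow> bool" where
  "class_property M X n Y GG \<longleftrightarrow>
     (\<forall>xi\<in>X. \<forall>xj\<in>X. \<forall>Ms Ns. \<forall>g1\<in>GG. \<forall>g2\<in>GG. \<forall>k. Ms \<subseteq> X \<and> Ns \<subseteq> X \<longrightarrow>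
        \<not> prob_space.indep_var M borel (n k) borel (resid Y xi g1 Ms) \<longrightarrow>
        \<not> prob_space.indep_var M borel (n k) borel (resid Y xj g2 Ns) \<longrightarrow>
        \<not> prob_space.indep_var M borel (resid Y xi g1 Ms) borel (resid Y xj g2 Ns))"

text \<open>Standing fact (F3), taken as known.\<close>
definition fact_F3 :: "'a measure \<Rightarrow> ('v \<times> 'v) set \<Rightarrow> 'v set \<Rightarrow> ('v \<Rightarrow> 'a \<Rightarrow> real)
     \<Rightarrow> ('v \<Rightarrow> real \<Rightarrow> real) set \<Rightarrow> bool" where
  "fact_F3 M E X Y GG \<longleftrightarrow>
     (\<forall>X' \<subseteq> X. \<forall>xi\<in>X'. \<forall>xj\<in>X'. xi \<noteq> xj \<longrightarrow>
        (invisible E X' xi xj \<longleftrightarrow>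
          (\<forall>Ms Ns. \<forall>g1\<in>GG. \<forall>g2\<in>GG. Ms \<subseteq> X' - {xi} \<and> Ns \<subseteq> X' - {xj} \<longrightarrow>
             \<not> prob_space.indep_var M borel (resid Y xi g1 Ms) borel (resid Y xj g2 Ns))))"

end

theory Submission
  imports Defs
begin

text \<open>By (F3) the pair is invisible, so there is an unobserved causal path between x_i and x_j or
  an unobserved backdoor path. Unless it is a causal path from x_i to x_j, it reaches x_i through
  an edge pointing into x_i, i.e. it is a trek x_i \<leftarrow> \<dots> \<leftarrow> v \<rightarrow> \<dots> \<rightarrow> x_j. Follow a directed path
  from x_k towards x_i up to its first vertex on the trek and continue along the trek to x_j.
  On the resulting path the only possible collider is the junction, which is an ancestor of x_i
  (or x_i itself), and no non-collider equals x_i; so conditioning on x_i does not block it, and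
  x_k and x_j are d-connected given x_i. By faithfulness this contradicts x_k \<perp> x_j | x_i.\<close>

lemma acyclic_not_sym: "acyclic E \<Longrightarrow> (a, b) \<in> E \<Longrightarrow> (b, a) \<notin> E"
  by (meson acyclic_def r_into_trancl trancl_trans)

lemma dpath_rtrancl:
  assumes "is_dpath E ps" "i \<le> j" "j < length ps"
  shows "(ps ! i, ps ! j) \<in> E\<^sup>*"
  using assms(2,3)
proof (induction j)
  case (Suc j)
  show ?case
  proof (cases "i = Suc j")
    case False
    then have "(ps ! i, ps ! j) \<in> E\<^sup>*" using Suc by simp
    moreover have "(ps ! j, ps ! Suc j) \<in> E" using Suc.prems assms(1) unfolding is_dpath_def by blast
    ultimately show ?thesis by simp
  qed simp
qed simp

lemma UCP_imp_ancestor: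
  assumes "UCP E X' a b"
  shows "ancestor E a b"
proof -
  obtain ps where ps: "is_dpath E ps" "2 \<le> length ps" "hd ps = a" "last ps = b"
    using assms unfolding UCP_def by blast
  define k where "k = length ps - 2"
  have k: "Suc k < length ps" "Suc k = length ps - 1" using ps(2) unfolding k_def by auto
  have "(ps ! 0, ps ! k) \<in> E\<^sup>*" using dpath_rtrancl[OF ps(1)] k by simp
  moreover have "(ps ! k, ps ! Suc k) \<in> E" using ps(1) k unfolding is_dpath_def by blast
  ultimately have "(ps ! 0, ps ! (length ps - 1)) \<in> E\<^sup>+" using k(2) by simp
  moreover have "ps \<noteq> []" using ps(2) by auto
  ultimately show ?thesis
    using ps by (simp add: ancestor_def hd_conv_nth last_conv_nth)
qed

lemma is_dpath_snoc:
  assumes "is_dpath E ps" "(last ps, z) \<in> E" "z \<notin> set ps"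
  shows "is_dpath E (ps @ [z])"
  unfolding is_dpath_def
proof (intro conjI allI impI)
  show "ps @ [z] \<noteq> []" "distinct (ps @ [z])" using assms unfolding is_dpath_def by simp_all
  fix i assume i: "Suc i < length (ps @ [z])"
  show "((ps @ [z]) ! i, (ps @ [z]) ! Suc i) \<in> E"
  proof (cases "Suc i < length ps")
    case True
    then show ?thesis using assms(1) unfolding is_dpath_def by (simp add: nth_append)
  next
    case False
    then have "i = length ps - 1" "ps \<noteq> []" using i assms(1) unfolding is_dpath_def by auto
    then show ?thesis using assms(2) by (simp add: nth_append last_conv_nth)
  qed
qed

lemma trancl_imp_dpath:
  assumes "acyclic E" "(a, b) \<in> E\<^sup>+"
  shows "\<exists>ps. is_dpath E ps \<and> hd ps = a \<and> last ps = b"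
  using assms(2)
proof (induction rule: trancl_induct)
  case (base y)
  then have "is_dpath E [a, y]"
    using assms(1) unfolding is_dpath_def acyclic_def
    by (auto simp: less_Suc_eq nth_Cons split: nat.splits)
  then show ?case by force
next
  case (step y z)
  then obtain ps where ps: "is_dpath E ps" "hd ps = a" "last ps = y" by blast
  have "z \<notin> set ps"
  proof
    assume "z \<in> set ps"
    then obtain i where i: "i < length ps" "ps ! i = z" by (auto simp: in_set_conv_nth)
    moreover have "ps \<noteq> []" using ps(1) unfolding is_dpath_def by simp
    ultimately have "(z, y) \<in> E\<^sup>*"
      using dpath_rtrancl[OF ps(1), of i "length ps - 1"] ps(3) by (simp add: last_conv_nth)
    then show False using step(2) assms(1) unfolding acyclic_def by (meson rtrancl_into_trancl1)
  qed
  then have "is_dpath E (ps @ [z])" using is_dpath_snoc ps step(2) by metis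
  moreover have "hd (ps @ [z]) = a" using ps unfolding is_dpath_def by simp
  ultimately show ?case by force
qed

subsection \<open>Treks entering their first vertex\<close>

text \<open>W!0 \<leftarrow> \<dots> \<leftarrow> W!t \<rightarrow> \<dots> \<rightarrow> last W; since t \<ge> 1 the trek ends at W!0 with an arrowhead.\<close>
definition trek :: "('v \<times> 'v) set \<Rightarrow> 'v list \<Rightarrow> nat \<Rightarrow> bool" where
  "trek E W t \<longleftrightarrow> distinct W \<and> 2 \<le> length W \<and> 1 \<le> t \<and>
     (\<forall>i. Suc i < length W \<longrightarrow>
        (i < t \<longrightarrow> (W ! Suc i, W ! i) \<in> E) \<and> (t \<le> i \<longrightarrow> (W ! i, W ! Suc i) \<in> E))"

lemma trek_adjacent: "trek E W t \<Longrightarrow> Suc i < length W \<Longrightarrow> adjacent E (W ! i) (W ! Suc i)"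
  unfolding trek_def adjacent_def by (metis not_less)

lemma trek_root_edge:
  assumes "trek E W t"
  shows "(W ! 1, W ! 0) \<in> E"
proof -
  have "0 < t" "Suc 0 < length W" using assms unfolding trek_def by auto
  then show ?thesis using assms unfolding trek_def by simp
qed

lemma trek_not_collider:
  assumes "acyclic E" "trek E W t" "0 < i" "Suc i < length W"
  shows "\<not> ((W ! (i - 1), W ! i) \<in> E \<and> (W ! Suc i, W ! i) \<in> E)"
proof (cases "i < t")
  case True
  then have "i - 1 < t" "Suc (i - 1) = i" "Suc (i - 1) < length W" using assms(3,4) by auto
  then have "(W ! i, W ! (i - 1)) \<in> E" using assms(2) unfolding trek_def by metis
  then show ?thesis using acyclic_not_sym[OF assms(1)] by blast
next
  case False
  then have "(W ! i, W ! Suc i) \<in> E" using assms(2,4) unfolding trek_def by simp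
  then show ?thesis using acyclic_not_sym[OF assms(1)] by blast
qed

lemma trek_left_part_rtrancl_root:
  "trek E W t \<Longrightarrow> c \<le> t \<Longrightarrow> c < length W \<Longrightarrow> (W ! c, W ! 0) \<in> E\<^sup>*"
proof (induction c)
  case (Suc c)
  then have "(W ! Suc c, W ! c) \<in> E" unfolding trek_def by auto
  then show ?case using Suc by (meson Suc_leD Suc_lessD converse_rtrancl_into_rtrancl)
qed simp

lemma trek_arrowhead_rtrancl_root:
  assumes "acyclic E" "trek E W t" "Suc c < length W" "(W ! Suc c, W ! c) \<in> E"
  shows "(W ! c, W ! 0) \<in> E\<^sup>*"
proof -
  have "c < t"
  proof (rule ccontr)
    assume "\<not> c < t"
    then have "(W ! c, W ! Suc c) \<in> E" using assms(2,3) unfolding trek_def by simp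
    then show False using acyclic_not_sym[OF assms(1)] assms(4) by blast
  qed
  then show ?thesis using trek_left_part_rtrancl_root[OF assms(2), of c] assms(3) by simp
qed

lemma trek_root_mem: "trek E W t \<Longrightarrow> W ! 0 \<in> set W"
  unfolding trek_def by (auto intro: nth_mem)

lemma trek_nth_neq_root:
  assumes "trek E W t" "0 < i" "i < length W"
  shows "W ! i \<noteq> W ! 0"
proof -
  have "0 < length W" "distinct W" using assms unfolding trek_def by auto
  then show ?thesis using assms nth_eq_iff_index_eq[of W i 0] by simp
qed

lemma rev_dpath_trek:
  assumes "is_dpath E q" "2 \<le> length q"
  shows "trek E (rev q) (length q - 1)"
  unfolding trek_def
proof (intro conjI allI impI)
  show "distinct (rev q)" "2 \<le> length (rev q)" "1 \<le> length q - 1"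
    using assms unfolding is_dpath_def by auto
  fix i assume "Suc i < length (rev q)"
  then have i: "Suc i < length q" by simp
  have "rev q ! i = q ! Suc (length q - Suc (Suc i))" "rev q ! Suc i = q ! (length q - Suc (Suc i))"
    using i by (simp_all add: rev_nth Suc_diff_Suc)
  then show "(rev q ! Suc i, rev q ! i) \<in> E"
    using assms(1) i unfolding is_dpath_def by simp
  show "(rev q ! i, rev q ! Suc i) \<in> E" if "length q - 1 \<le> i"
    using that i by simp
qed

lemma UCP_rev_trek:
  assumes "UCP E X' b a"
  shows "\<exists>W t. trek E W t \<and> W ! 0 = a \<and> last W = b"
proof -
  obtain q where q: "is_dpath E q" "2 \<le> length q" "hd q = b" "last q = a"
    using assms unfolding UCP_def by blast
  have "q \<noteq> []" using q(2) by auto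
  then have "rev q ! 0 = a" using q(4) by (metis hd_conv_nth hd_rev rev_is_Nil_conv)
  moreover have "last (rev q) = b" using q(3) by (simp add: last_rev)
  ultimately show ?thesis using rev_dpath_trek[OF q(1,2)] by blast
qed

lemma distinct_rev_append_tl:
  assumes "distinct p" "distinct q" "q \<noteq> []" "set p \<inter> set q = {hd q}"
  shows "distinct (rev p @ tl q)"
proof -
  have "x \<notin> set (tl q)" if "x \<in> set p" for x
  proof
    assume x: "x \<in> set (tl q)"
    then have "x \<in> set p \<inter> set q" using that list.set_sel(2)[of q] assms(3) by simp
    then have "x = hd q" using assms(4) by simp
    then show False using x assms(2,3) by (cases q) auto
  qed
  then show ?thesis using assms(1,2) by (auto simp: distinct_tl)
qed

lemma fork_trek:
  assumes p: "is_dpath E p" "2 \<le> length p" and q: "is_dpath E q" "2 \<le> length q"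
    and top: "hd p = hd q" "set p \<inter> set q = {hd p}"
  shows "trek E (rev p @ tl q) (length p - 1)"
proof -
  have pe: "\<And>i. Suc i < length p \<Longrightarrow> (p ! i, p ! Suc i) \<in> E"
    and qe: "\<And>i. Suc i < length q \<Longrightarrow> (q ! i, q ! Suc i) \<in> E"
    using p(1) q(1) unfolding is_dpath_def by auto
  define W where "W = rev p @ tl q"
  have lW: "length W = length p + length q - 1" unfolding W_def using q by simp
  have Wn: "\<And>i. i < length W \<Longrightarrow>
      W ! i = (if i < length p then p ! (length p - Suc i) else q ! (i - length p + 1))"
    unfolding W_def using q(2) by (auto simp: nth_append rev_nth nth_tl)
  have ne: "p \<noteq> []" "q \<noteq> []" using p(2) q(2) by auto
  then have hd0: "hd p = p ! 0" "hd q = q ! 0" by (simp_all add: hd_conv_nth)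
  show ?thesis
    unfolding trek_def W_def[symmetric]
  proof (intro conjI allI impI)
    have "distinct p" "distinct q" using p(1) q(1) unfolding is_dpath_def by simp_all
    moreover have "set p \<inter> set q = {hd q}" using top by simp
    ultimately show "distinct W" unfolding W_def using distinct_rev_append_tl ne(2) by blast
    show "2 \<le> length W" "1 \<le> length p - 1" using lW p(2) q(2) by simp_all
    fix i assume i: "Suc i < length W"
    show "(W ! Suc i, W ! i) \<in> E" if "i < length p - 1"
    proof -
      have "W ! i = p ! Suc (length p - Suc (Suc i))" "W ! Suc i = p ! (length p - Suc (Suc i))"
        using Wn[of i] Wn[of "Suc i"] i that by (auto simp: Suc_diff_Suc)
      then show ?thesis using pe that by simp
    qed
    show "(W ! i, W ! Suc i) \<in> E" if "length p - 1 \<le> i"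
    proof (cases "i = length p - 1")
      case True
      then have "W ! i = q ! 0" "W ! Suc i = q ! 1"
        using Wn[of i] Wn[of "Suc i"] i p(2) top(1) hd0 by auto
      then show ?thesis using qe[of 0] q(2) by simp
    next
      case False
      then have "W ! i = q ! (i - length p + 1)" "W ! Suc i = q ! Suc (i - length p + 1)"
        using Wn[of i] Wn[of "Suc i"] i that by (auto simp: Suc_diff_le)
      then show ?thesis using qe[of "i - length p + 1"] i lW False that by simp
    qed
  qed
qed

lemma UBP_trek:
  assumes "UBP E X' a b"
  shows "\<exists>W t. trek E W t \<and> W ! 0 = a \<and> last W = b"
proof -
  obtain p q where p: "is_dpath E p" "2 \<le> length p" "last p = a"
    and q: "is_dpath E q" "2 \<le> length q" "last q = b"
    and top: "hd p = hd q" "set p \<inter> set q = {hd p}"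
    using assms unfolding UBP_def by blast
  have "p \<noteq> []" using p(2) by auto
  then have "(rev p @ tl q) ! 0 = a" using p(3) by (simp add: nth_append rev_nth last_conv_nth)
  moreover have "last (rev p @ tl q) = b" using q(2,3) last_tl[of q] by (cases q) auto
  ultimately show ?thesis using fork_trek[OF p(1,2) q(1,2) top] by blast
qed

lemma invisible_imp_trek:
  assumes "invisible E X' a b" "\<not> UCP E X' a b"
  shows "\<exists>W t. trek E W t \<and> W ! 0 = a \<and> last W = b"
proof -
  have "UBP E X' a b \<or> UCP E X' b a" using assms unfolding invisible_def by simp
  then show ?thesis using UBP_trek UCP_rev_trek by metis
qed

subsection \<open>Splicing a directed path into a trek\<close>

definition blocks_at :: "('v \<times> 'v) set \<Rightarrow> 'v set \<Rightarrow> 'v list \<Rightarrow> nat \<Rightarrow> bool" where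
  "blocks_at E Z ps i \<longleftrightarrow> (\<not> collider_at E ps i \<and> ps ! i \<in> Z) \<or>
     (collider_at E ps i \<and> {d. (ps ! i, d) \<in> E\<^sup>*} \<inter> Z = {})"

lemma blocked_iff_blocks_at:
  "blocked E Z ps \<longleftrightarrow> (\<exists>i. 0 < i \<and> Suc i < length ps \<and> blocks_at E Z ps i)"
  unfolding blocked_def blocks_at_def by simp

definition splice :: "'v list \<Rightarrow> nat \<Rightarrow> 'v list \<Rightarrow> nat \<Rightarrow> 'v list" where
  "splice xs a ys b = take a xs @ drop b ys"

context
  fixes E :: "('v \<times> 'v) set" and p W :: "'v list" and t a b :: nat
  assumes acyc: "acyclic E" and p: "is_dpath E p" and W: "trek E W t"
    and meet: "a < length p" "b < length W" "p ! a = W ! b"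
    and avoid: "set (take a p) \<inter> set W = {}"
begin

lemma splice_length: "length (splice p a W b) = a + (length W - b)"
  using meet unfolding splice_def by simp

lemma splice_nth:
  "i < length (splice p a W b) \<Longrightarrow> splice p a W b ! i = (if i < a then p ! i else W ! (b + (i - a)))"
  using meet unfolding splice_def by (auto simp: nth_append min_def)

lemma splice_nth_le: "i \<le> a \<Longrightarrow> splice p a W b ! i = p ! i"
  using splice_nth[of i] splice_length meet by (cases "i < a") auto

lemma splice_is_path: "is_path E (splice p a W b)"
  unfolding is_path_def
proof (intro conjI allI impI)
  show "splice p a W b \<noteq> []" using splice_length meet by auto
  have "distinct p" "distinct W" using p W unfolding is_dpath_def trek_def by auto
  then show "distinct (splice p a W b)"
    unfolding splice_def using avoid set_drop_subset[of b W] by auto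
  fix i assume i: "Suc i < length (splice p a W b)"
  show "adjacent E (splice p a W b ! i) (splice p a W b ! Suc i)"
  proof (cases "Suc i \<le> a")
    case True
    then show ?thesis
      using splice_nth_le[of i] splice_nth_le[of "Suc i"] p meet unfolding is_dpath_def adjacent_def
      by simp
  next
    case False
    then have "splice p a W b ! i = W ! (b + (i - a))"
      "splice p a W b ! Suc i = W ! Suc (b + (i - a))" "Suc (b + (i - a)) < length W"
      using splice_nth[of i] splice_nth[of "Suc i"] i splice_length by (auto simp: Suc_diff_le)
    then show ?thesis using trek_adjacent[OF W] by simp
  qed
qed

lemma splice_not_blocks_at_prefix:
  assumes "0 < i" "i < a"
  shows "\<not> blocks_at E {W ! 0} (splice p a W b) i"
proof -
  have "(p ! i, p ! Suc i) \<in> E" using p assms meet unfolding is_dpath_def by simp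
  then have "\<not> collider_at E (splice p a W b) i"
    using splice_nth_le[of "Suc i"] assms acyclic_not_sym[OF acyc]
    unfolding collider_at_def by (simp add: splice_nth_le)
  moreover have "p ! i \<in> set (take a p)"
    using assms meet nth_mem[of i "take a p"] by simp
  then have "p ! i \<notin> set W" using avoid by blast
  ultimately show ?thesis
    using trek_root_mem[OF W] assms splice_nth_le[of i] unfolding blocks_at_def by auto
qed

lemma splice_not_blocks_at_junction:
  assumes "0 < a" "Suc a < length (splice p a W b)"
  shows "\<not> blocks_at E {W ! 0} (splice p a W b) a"
proof -
  obtain a' where a': "a = Suc a'" using assms(1) by (cases a) auto
  have b: "Suc b < length W" using assms(2) splice_length by simp
  have C: "splice p a W b ! (a - 1) = p ! a'" "splice p a W b ! a = W ! b"
    "splice p a W b ! Suc a = W ! Suc b"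
    using splice_nth_le[of a'] splice_nth_le[of a] splice_nth[of "Suc a"] assms(2) meet(3) a'
    by simp_all
  show ?thesis
  proof (cases "b = 0")
    case True
    have "(p ! a', p ! a) \<in> E" using p meet(1) a' unfolding is_dpath_def by simp
    then have "collider_at E (splice p a W b) a"
      using trek_root_edge[OF W] True C meet(3) unfolding collider_at_def by simp
    then show ?thesis using C True unfolding blocks_at_def by simp
  next
    case False
    then have "W ! b \<noteq> W ! 0" using trek_nth_neq_root[OF W] meet(2) by blast
    moreover have "(W ! b, W ! 0) \<in> E\<^sup>*" if "collider_at E (splice p a W b) a"
      using that C trek_arrowhead_rtrancl_root[OF acyc W b] unfolding collider_at_def by simp
    ultimately show ?thesis using C unfolding blocks_at_def by auto
  qed
qed

lemma splice_not_blocks_at_suffix: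
  assumes "a < i" "Suc i < length (splice p a W b)"
  shows "\<not> blocks_at E {W ! 0} (splice p a W b) i"
proof -
  define j where "j = b + (i - a)"
  have j: "0 < j" "Suc j < length W" using assms splice_length unfolding j_def by auto
  have C: "splice p a W b ! (i - 1) = W ! (j - 1)" "splice p a W b ! i = W ! j"
    "splice p a W b ! Suc i = W ! Suc j"
    using splice_nth[of "i - 1"] splice_nth[of i] splice_nth[of "Suc i"] assms
    unfolding j_def by (auto simp: Suc_diff_le)
  have "\<not> collider_at E (splice p a W b) i"
    unfolding collider_at_def C using trek_not_collider[OF acyc W j] by blast
  moreover have "W ! j \<noteq> W ! 0" using trek_nth_neq_root[OF W] j by simp
  ultimately show ?thesis using C unfolding blocks_at_def by auto
qed

lemma splice_not_blocked: "\<not> blocked E {W ! 0} (splice p a W b)"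
proof
  assume "blocked E {W ! 0} (splice p a W b)"
  then obtain i where i: "0 < i" "Suc i < length (splice p a W b)"
    and blocks: "blocks_at E {W ! 0} (splice p a W b) i"
    unfolding blocked_iff_blocks_at by blast
  consider "i < a" | "i = a" | "a < i" by linarith
  then show False
  proof cases
    case 1
    then show False using splice_not_blocks_at_prefix i blocks by blast
  next
    case 2
    then show False using splice_not_blocks_at_junction i blocks by blast
  next
    case 3
    then show False using splice_not_blocks_at_suffix i blocks by blast
  qed
qed

end

lemma dpath_trek_not_d_separated:
  assumes acyc: "acyclic E" and p: "is_dpath E p" "last p = W ! 0" and W: "trek E W t"
  shows "\<not> d_separated E {hd p} {last W} {W ! 0}"
proof -
  have p_ne: "p \<noteq> []" using p(1) unfolding is_dpath_def by simp
  have "\<exists>a. a < length p \<and> p ! a \<in> set W"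
    using p_ne p(2) trek_root_mem[OF W] by (intro exI[of _ "length p - 1"]) (simp add: last_conv_nth)
  then obtain a where a: "a < length p" "p ! a \<in> set W"
    and first: "\<And>a'. a' < a \<Longrightarrow> p ! a' \<notin> set W"
    using exists_least_iff[of "\<lambda>a. a < length p \<and> p ! a \<in> set W"] by (metis less_trans)
  obtain b where b: "b < length W" "W ! b = p ! a" using a(2) by (auto simp: in_set_conv_nth)
  have avoid: "set (take a p) \<inter> set W = {}"
    using first a(1) by (auto simp: in_set_conv_nth)
  note splice_facts = acyc p(1) W a(1) b(1) b(2)[symmetric] avoid
  have "hd (splice p a W b) = hd p"
    using splice_is_path[OF splice_facts] splice_nth_le[OF splice_facts, of 0] p_ne
    unfolding is_path_def by (simp add: hd_conv_nth)
  moreover have "last (splice p a W b) = last W" using b(1) unfolding splice_def by simp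
  ultimately show ?thesis
    using splice_is_path[OF splice_facts] splice_not_blocked[OF splice_facts]
    unfolding d_separated_def by auto
qed

theorem corollary1:
  fixes M :: "'a measure" and E :: "('v::finite \<times> 'v) set"
    and f :: "'v \<Rightarrow> 'v \<Rightarrow> real \<Rightarrow> real" and n Y :: "'v \<Rightarrow> 'a \<Rightarrow> real"
    and X :: "'v set" and GG :: "('v \<Rightarrow> real \<Rightarrow> real) set"
    and xi xj xk :: 'v
  assumes model: "SEM M E f n Y"
    and cfc: "CFC M E Y"
    and cls: "class_property M X n Y GG"
    and F3: "fact_F3 M E X Y GG"
    and mem: "xi \<in> X" "xj \<in> X" "xk \<in> X"
    and dist: "xi \<noteq> xj" "xi \<noteq> xk" "xj \<noteq> xk"
    and inv: "\<forall>Ms Ns. \<forall>g1\<in>GG. \<forall>g2\<in>GG. Ms \<subseteq> X - {xi} \<and> Ns \<subseteq> X - {xj} \<longrightarrow>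
               \<not> prob_space.indep_var M borel (resid Y xi g1 Ms) borel (resid Y xj g2 Ns)"
    and anc: "ancestor E xk xi"
    and ci: "cond_indep M Y {xk} {xj} {xi}"
  shows "ancestor E xi xj"
proof (rule ccontr)
  assume not_anc: "\<not> ancestor E xi xj"
  have acyc: "acyclic E" using model unfolding SEM_def by blast
  have "invisible E X xi xj"
    using F3 mem(1,2) dist(1) inv unfolding fact_F3_def by (meson order_refl)
  moreover have "\<not> UCP E X xi xj" using not_anc UCP_imp_ancestor by metis
  ultimately obtain W t where W: "trek E W t" "W ! 0 = xi" "last W = xj"
    using invisible_imp_trek by metis
  obtain p where p: "is_dpath E p" "hd p = xk" "last p = xi"
    using trancl_imp_dpath[OF acyc] anc unfolding ancestor_def by blast
  have "\<not> d_separated E {xk} {xj} {xi}"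
    using dpath_trek_not_d_separated[OF acyc p(1) _ W(1)] p W by simp
  moreover have "d_separated E {xk} {xj} {xi}" using cfc ci dist unfolding CFC_def by simp
  ultimately show False by contradiction
qed

end
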